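(* Let $k$ be a positive integer. If $G$ is an $(A,U,B)$-structure graph (with respect to $k$), then $G$ is $k$-placeable.
   Context: All graphs are finite and simple. For a graph $H$ on $m$ vertices, a $k$-placement of $H$ (in $K_m$) is a $k$-tuple $(\phi_1,\dots,\phi_k)$ of bijections $\phi_i:V(H)\to V(K_m)$ such that the edge sets $\phi_i(E(H))=\{\phi_i(x)\phi_i(y):xy\in E(H)\}$ are pairwise disjoint; $H$ is $k$-placeable if it has one. A vertex $v$ is $k$-placed if $\phi_i(v)\neq\phi_j(v)$ for all $i\ne j$, and $k$-fixed if $\phi_i(v)=\phi_j(v)$ for all $i,j$. $N_G(X)$ denotes the set of vertices outside $X$ adjacent to some vertex of $X$, and $N_A(u)$ the set of neighbours of $u$ in $V(A)$. Definition: let $A,B$ be vertex-disjoint induced subgraphs of $G$ and let $U\subseteq V(G)$ be an independent set (possibly empty) such that either $V(A),V(B),U$ is a partition of $V(G)$, or $V(A),V(B)$ is a partition of $V(G)$ with $U\subseteq V(A)$ or $U\subseteq V(B)$. $G$ is an $(A,U,B)$-structure graph if (i) at most one vertex $a\in V(A)\setminus U$ has neighbours in $V(B)\setminus U$, and for each $u\in U$ we have $|N_A(u)|\le 1$ if $U\cap V(A)=\emptyset$ and $|N_B(u)|\le1$ if $U\cap V(B)=\emptyset$; and (ii) each of $A$ and $B$ has a $k$-placement (in $K_{|V(A)|}$, resp. $K_{|V(B)|}$) such that the vertices of $N_G(U)$ and the vertex $a$ are $k$-placed and each vertex of $U$ is $k$-fixed (when $U$ is disjoint from $V(A)\cup V(B)$,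 $U$ is placed on its own $|U|$ vertices with each vertex $k$-fixed). *)

theory Defs
  imports Main
begin

definition simple_graph :: "'a set \<Rightarrow> 'a set set \<Rightarrow> bool" where
  "simple_graph V E \<longleftrightarrow> finite V \<and>
     (\<forall>e\<in>E. \<exists>x y. e = {x, y} \<and> x \<noteq> y \<and> x \<in> V \<and> y \<in> V)"

definition induced_edges :: "'a set set \<Rightarrow> 'a set \<Rightarrow> 'a set set" where
  "induced_edges E S = {e \<in> E. e \<subseteq> S}"

definition edge_image :: "('a \<Rightarrow> 'b) \<Rightarrow> 'a set set \<Rightarrow> 'b set set" where
  "edge_image f E = {{f x, f y} | x y. {x, y} \<in> E}"

text \<open>A k-placement of the graph (V,E) in the complete graph on the vertex set W
  (with |W| = |V|): k bijections V \<rightarrow> W (indexed by i < k) whose edge images are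
  pairwise disjoint.\<close>
definition placement_in ::
  "nat \<Rightarrow> 'a set \<Rightarrow> 'a set set \<Rightarrow> 'b set \<Rightarrow> (nat \<Rightarrow> 'a \<Rightarrow> 'b) \<Rightarrow> bool" where
  "placement_in k V E W \<phi> \<longleftrightarrow>
     (\<forall>i<k. bij_betw (\<phi> i) V W) \<and>
     (\<forall>i<k. \<forall>j<k. i \<noteq> j \<longrightarrow> edge_image (\<phi> i) E \<inter> edge_image (\<phi> j) E = {})"

text \<open>A k-placement of H in K_{|V(H)|}; we take V(H) itself as vertex set of the
  complete graph.\<close>
definition placement :: "nat \<Rightarrow> 'a set \<Rightarrow> 'a set set \<Rightarrow> (nat \<Rightarrow> 'a \<Rightarrow> 'a) \<Rightarrow> bool" where
  "placement k V E \<phi> \<longleftrightarrow> placement_in k V E V \<phi>"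

definition placeable :: "nat \<Rightarrow> 'a set \<Rightarrow> 'a set set \<Rightarrow> bool" where
  "placeable k V E \<longleftrightarrow> (\<exists>\<phi>. placement k V E \<phi>)"

definition k_placed :: "nat \<Rightarrow> (nat \<Rightarrow> 'a \<Rightarrow> 'b) \<Rightarrow> 'a \<Rightarrow> bool" where
  "k_placed k \<phi> v \<longleftrightarrow> (\<forall>i<k. \<forall>j<k. i \<noteq> j \<longrightarrow> \<phi> i v \<noteq> \<phi> j v)"

definition k_fixed :: "nat \<Rightarrow> (nat \<Rightarrow> 'a \<Rightarrow> 'b) \<Rightarrow> 'a \<Rightarrow> bool" where
  "k_fixed k \<phi> v \<longleftrightarrow> (\<forall>i<k. \<forall>j<k. \<phi> i v = \<phi> j v)"

definition adj :: "'a set set \<Rightarrow> 'a \<Rightarrow> 'a \<Rightarrow> bool" where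
  "adj E x y \<longleftrightarrow> {x, y} \<in> E"

definition nbhd_set :: "'a set \<Rightarrow> 'a set set \<Rightarrow> 'a set \<Rightarrow> 'a set" where
  "nbhd_set V E X = {v \<in> V - X. \<exists>x\<in>X. adj E v x}"

definition nbrs_in :: "'a set set \<Rightarrow> 'a set \<Rightarrow> 'a \<Rightarrow> 'a set" where
  "nbrs_in E S u = {v \<in> S. adj E u v}"

definition independent :: "'a set \<Rightarrow> 'a set set \<Rightarrow> 'a set \<Rightarrow> bool" where
  "independent V E U \<longleftrightarrow> U \<subseteq> V \<and> (\<forall>x\<in>U. \<forall>y\<in>U. \<not> adj E x y)"

text \<open>The induced subgraphs A, B are
  given by their vertex sets VA, VB. The vertex a is a vertex such that every vertex
  of VA - U having a neighbour in VB - U equals a ("at most one such vertex");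
  it is required to be k-placed in the placement of A (when it lies in VA).\<close>
definition structure_graph ::
  "nat \<Rightarrow> 'a set \<Rightarrow> 'a set set \<Rightarrow> 'a set \<Rightarrow> 'a set \<Rightarrow> 'a set \<Rightarrow> bool" where
  "structure_graph k V E VA U VB \<longleftrightarrow>
     VA \<subseteq> V \<and> VB \<subseteq> V \<and> VA \<inter> VB = {} \<and> independent V E U \<and>
     ((VA \<union> VB \<union> U = V \<and> U \<inter> VA = {} \<and> U \<inter> VB = {}) \<or>
      (VA \<union> VB = V \<and> (U \<subseteq> VA \<or> U \<subseteq> VB))) \<and>
     (\<exists>a.
        (\<forall>v\<in>VA - U. (\<exists>w\<in>VB - U. adj E v w) \<longrightarrow> v = a) \<and>
        (\<forall>u\<in>U. (U \<inter> VA = {} \<longrightarrow> card (nbrs_in E VA u) \<le> 1) \<and>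
                (U \<inter> VB = {} \<longrightarrow> card (nbrs_in E VB u) \<le> 1)) \<and>
        (\<exists>\<phi>. placement k VA (induced_edges E VA) \<phi> \<and>
             (\<forall>v\<in>VA. (v \<in> nbhd_set V E U \<or> v = a) \<longrightarrow> k_placed k \<phi> v) \<and>
             (\<forall>v\<in>VA \<inter> U. k_fixed k \<phi> v)) \<and>
        (\<exists>\<psi>. placement k VB (induced_edges E VB) \<psi> \<and>
             (\<forall>v\<in>VB. v \<in> nbhd_set V E U \<longrightarrow> k_placed k \<psi> v) \<and>
             (\<forall>v\<in>VB \<inter> U. k_fixed k \<psi> v)))"

end

theory Submission
  imports Defs
begin

text \<open>The i-th placement of G acts as the i-th placement of A on V(A), as the i-th
  placement of B on V(B) and as the identity elsewhere. Edges inside A or inside B keep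
  disjoint images because the placements of A and B do. Any other edge either touches U,
  whose vertices are fixed while their unique neighbour on the far side is moved by every
  placement, or it joins A - U to B - U and hence contains a, which is moved by every
  placement as well.\<close>

lemma simple_graph_edgeD:
  assumes "simple_graph V E" and "{x, y} \<in> E"
  shows "x \<in> V" and "y \<in> V"
  using assms unfolding simple_graph_def by (auto simp: doubleton_eq_iff)

lemma adj_commute: "adj E x y \<longleftrightarrow> adj E y x"
  unfolding adj_def by (simp add: insert_commute)

lemma edge_image_disjointI:
  assumes "\<And>x y x' y'. {x, y} \<in> E \<Longrightarrow> {x', y'} \<in> E \<Longrightarrow>
    f x = g x' \<Longrightarrow> f y = g y' \<Longrightarrow> False"
  shows "edge_image f E \<inter> edge_image g E = {}"
proof (rule ccontr)
  assume "edge_image f E \<inter> edge_image g E \<noteq> {}"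
  then obtain x y x' y' where xy: "{x, y} \<in> E" and x'y': "{x', y'} \<in> E"
    and "{f x, f y} = {g x', g y'}"
    unfolding edge_image_def by blast
  then have "f x = g x' \<and> f y = g y' \<or> f x = g y' \<and> f y = g x'"
    by (simp add: doubleton_eq_iff)
  moreover have "{y', x'} \<in> E" using x'y' by (simp add: insert_commute)
  ultimately show False
    using assms[OF xy x'y'] assms[OF xy] by blast
qed

lemma placement_no_collision:
  assumes "placement k S (induced_edges E S) \<chi>" and "i < k" "j < k" "i \<noteq> j"
    and "{x, y} \<in> E" "{x', y'} \<in> E" "x \<in> S" "y \<in> S" "x' \<in> S" "y' \<in> S"
    and "\<chi> i x = \<chi> j x'" "\<chi> i y = \<chi> j y'"
  shows False
proof -
  have disjoint: "edge_image (\<chi> i) (induced_edges E S) \<inter> edge_image (\<chi> j) (induced_edges E S) = {}"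
    using assms(1-4) unfolding placement_def placement_in_def by blast
  have "{x, y} \<in> induced_edges E S" "{x', y'} \<in> induced_edges E S"
    using assms(5-10) by (auto simp: induced_edges_def)
  then have "{\<chi> i x, \<chi> i y} \<in> edge_image (\<chi> i) (induced_edges E S)"
    "{\<chi> j x', \<chi> j y'} \<in> edge_image (\<chi> j) (induced_edges E S)"
    unfolding edge_image_def by blast+
  then show False using disjoint assms(11,12) by auto
qed

lemma bij_betw_glue:
  assumes "bij_betw f A A" "bij_betw g B B" "A \<inter> B = {}" "A \<subseteq> V" "B \<subseteq> V"
  shows "bij_betw (\<lambda>x. if x \<in> A then f x else if x \<in> B then g x else x) V V"
    (is "bij_betw ?h V V")
proof -
  have "bij_betw ?h A A"
    using assms(1) by (rule bij_betw_cong[THEN iffD1, rotated]) simp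
  moreover have "bij_betw ?h B B"
    using assms(2) by (rule bij_betw_cong[THEN iffD1, rotated]) (use assms(3) in auto)
  moreover have "bij_betw ?h (V - A - B) (V - A - B)"
    by (rule bij_betw_cong[THEN iffD1, OF _ bij_betw_id]) simp
  ultimately have "bij_betw ?h (A \<union> B \<union> (V - A - B)) (A \<union> B \<union> (V - A - B))"
    using assms(3) by (intro bij_betw_combine) auto
  moreover have "A \<union> B \<union> (V - A - B) = V" using assms(4,5) by blast
  ultimately show ?thesis by simp
qed

locale structure_graph_data =
  fixes k :: nat and V :: "'a set" and E :: "'a set set" and VA U VB :: "'a set"
    and a :: 'a and \<phi> \<psi> :: "nat \<Rightarrow> 'a \<Rightarrow> 'a"
  assumes simple: "simple_graph V E"
    and VA_subset: "VA \<subseteq> V" and VB_subset: "VB \<subseteq> V" and sides_disjoint: "VA \<inter> VB = {}"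
    and U_independent: "independent V E U"
    and partition: "(VA \<union> VB \<union> U = V \<and> U \<inter> VA = {} \<and> U \<inter> VB = {}) \<or>
      (VA \<union> VB = V \<and> (U \<subseteq> VA \<or> U \<subseteq> VB))"
    and connector: "\<forall>v\<in>VA - U. (\<exists>w\<in>VB - U. adj E v w) \<longrightarrow> v = a"
    and U_neighbours: "\<forall>u\<in>U. (U \<inter> VA = {} \<longrightarrow> card (nbrs_in E VA u) \<le> 1) \<and>
      (U \<inter> VB = {} \<longrightarrow> card (nbrs_in E VB u) \<le> 1)"
    and placement_A: "placement k VA (induced_edges E VA) \<phi>"
    and placed_A: "\<forall>v\<in>VA. (v \<in> nbhd_set V E U \<or> v = a) \<longrightarrow> k_placed k \<phi> v"
    and fixed_A: "\<forall>v\<in>VA \<inter> U. k_fixed k \<phi> v"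
    and placement_B: "placement k VB (induced_edges E VB) \<psi>"
    and placed_B: "\<forall>v\<in>VB. v \<in> nbhd_set V E U \<longrightarrow> k_placed k \<psi> v"
    and fixed_B: "\<forall>v\<in>VB \<inter> U. k_fixed k \<psi> v"
begin

definition glued :: "nat \<Rightarrow> 'a \<Rightarrow> 'a" where
  "glued i x = (if x \<in> VA then \<phi> i x else if x \<in> VB then \<psi> i x else x)"

lemma V_covered: "V \<subseteq> VA \<union> VB \<union> U"
  using partition by blast

lemma bij_A: "i < k \<Longrightarrow> bij_betw (\<phi> i) VA VA"
  using placement_A unfolding placement_def placement_in_def by blast

lemma bij_B: "i < k \<Longrightarrow> bij_betw (\<psi> i) VB VB"
  using placement_B unfolding placement_def placement_in_def by blast

lemma bij_glued: "i < k \<Longrightarrow> bij_betw (glued i) V V"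
  unfolding glued_def[abs_def]
  using bij_A bij_B sides_disjoint VA_subset VB_subset by (rule bij_betw_glue)

lemma glued_eq_imp_eq:
  "i < k \<Longrightarrow> x \<in> V \<Longrightarrow> y \<in> V \<Longrightarrow> glued i x = glued i y \<Longrightarrow> x = y"
  using bij_glued by (meson bij_betw_imp_inj_on inj_onD)

lemma glued_in_side_iff:
  assumes "S = VA \<or> S = VB" and "i < k"
  shows "glued i x \<in> S \<longleftrightarrow> x \<in> S"
  using assms bij_betwE[OF bij_A[OF assms(2)]] bij_betwE[OF bij_B[OF assms(2)]] sides_disjoint
  by (auto simp: glued_def)

lemma glued_fixed_on_U:
  assumes "i < k" "j < k" "u \<in> U"
  shows "glued i u = glued j u"
proof -
  have "\<phi> i u = \<phi> j u" if "u \<in> VA"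
    using fixed_A assms that unfolding k_fixed_def by blast
  moreover have "\<psi> i u = \<psi> j u" if "u \<in> VB"
    using fixed_B assms that unfolding k_fixed_def by blast
  ultimately show ?thesis unfolding glued_def by simp
qed

lemma glued_placed_on_nbhd:
  assumes "i < k" "j < k" "i \<noteq> j" "v \<in> nbhd_set V E U"
  shows "glued i v \<noteq> glued j v"
proof -
  have "v \<in> VA \<or> v \<in> VB" using assms(4) V_covered unfolding nbhd_set_def by blast
  then show ?thesis
    using assms placed_A placed_B sides_disjoint unfolding glued_def k_placed_def by auto
qed

lemma glued_placed_at_connector:
  assumes "i < k" "j < k" "i \<noteq> j" "a \<in> VA"
  shows "glued i a \<noteq> glued j a"
  using assms placed_A unfolding glued_def k_placed_def by auto

lemma glued_eq_at_U:
  assumes "i < k" "j < k" "x \<in> V" "x' \<in> V" "glued i x = glued j x'" "x \<in> U \<or> x' \<in> U"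
  shows "x = x'"
  using assms glued_fixed_on_U glued_eq_imp_eq by metis

text \<open>If some u in U lies outside the side S, then all of U lies outside S, so u has at
  most one neighbour in S.\<close>
lemma unique_neighbour_in_side:
  assumes "S = VA \<or> S = VB" "u \<in> U" "u \<notin> S" "y \<in> S" "y' \<in> S" "adj E u y" "adj E u y'"
  shows "y = y'"
proof -
  have "U \<inter> S = {}" using partition sides_disjoint assms(1-3) by blast
  then have "card (nbrs_in E S u) \<le> 1" using U_neighbours assms(1,2) by blast
  moreover have "finite (nbrs_in E S u)"
    using simple VA_subset VB_subset assms(1) unfolding simple_graph_def nbrs_in_def
    by (metis (no_types, lifting) finite_subset mem_Collect_eq subsetI)
  moreover have "y \<in> nbrs_in E S u" "y' \<in> nbrs_in E S u"
    using assms(4-7) unfolding nbrs_in_def by auto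
  ultimately show ?thesis by (metis card_le_Suc0_iff_eq One_nat_def)
qed

lemma no_collision_within_side:
  assumes "S = VA \<or> S = VB" "i < k" "j < k" "i \<noteq> j" "{x, y} \<in> E" "{x', y'} \<in> E"
    "glued i x = glued j x'" "glued i y = glued j y'" "x \<in> S" "y \<in> S"
  shows False
proof -
  have "x' \<in> S" "y' \<in> S"
    using glued_in_side_iff[OF assms(1)] assms(2,3,7-10) by metis+
  from assms(1) show False
  proof
    assume "S = VA"
    then show False
      using placement_no_collision[OF placement_A assms(2-6)] assms(7-10) \<open>x' \<in> S\<close> \<open>y' \<in> S\<close>
      unfolding glued_def by simp
  next
    assume "S = VB"
    then have "x \<notin> VA" "y \<notin> VA" "x' \<notin> VA" "y' \<notin> VA"
      using sides_disjoint assms(9,10) \<open>x' \<in> S\<close> \<open>y' \<in> S\<close> by blast+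
    then show False
      using placement_no_collision[OF placement_B assms(2-6)] assms(7-10)
        \<open>x' \<in> S\<close> \<open>y' \<in> S\<close> \<open>S = VB\<close>
      unfolding glued_def by simp
  qed
qed

lemma no_collision_at_U:
  assumes "i < k" "j < k" "i \<noteq> j" "{x, y} \<in> E" "{x', y'} \<in> E"
    "glued i x = glued j x'" "glued i y = glued j y'" "x \<in> U \<or> x' \<in> U"
  shows False
proof -
  have V: "x \<in> V" "y \<in> V" "x' \<in> V" "y' \<in> V"
    using simple_graph_edgeD[OF simple] assms(4,5) by blast+
  have "x = x'" using glued_eq_at_U[OF assms(1,2) V(1,3) assms(6,8)] .
  with assms(8) have x: "x \<in> U" by blast
  have xy: "adj E x y" "adj E x y'" using assms(4,5) \<open>x = x'\<close> unfolding adj_def by auto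
  then have y: "y \<notin> U" using x U_independent unfolding independent_def by blast
  then have "y \<in> VA \<or> y \<in> VB" using V(2) V_covered by blast
  then obtain S where S: "S = VA \<or> S = VB" "y \<in> S" by blast
  show False
  proof (cases "x \<in> S")
    case True
    show False using no_collision_within_side[OF S(1) assms(1-7) True S(2)] .
  next
    case False
    have "y' \<in> S"
      using glued_in_side_iff[OF S(1), of j y'] glued_in_side_iff[OF S(1), of i y] assms(1,2,7) S(2)
      by simp
    then have "y = y'" by (rule unique_neighbour_in_side[OF S(1) x False S(2) _ xy])
    moreover have "y \<in> nbhd_set V E U"
      using y V(2) x xy(1) adj_commute[of E y x] unfolding nbhd_set_def by blast
    ultimately show False using glued_placed_on_nbhd[OF assms(1-3)] assms(7) by simp
  qed
qed

lemma no_collision_across: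
  assumes "i < k" "j < k" "i \<noteq> j" "{x, y} \<in> E" "{x', y'} \<in> E"
    "glued i x = glued j x'" "glued i y = glued j y'"
    "x \<in> VA - U" "y \<in> VB - U" "x' \<notin> U" "y' \<notin> U"
  shows False
proof -
  have "x' \<in> VA" "y' \<in> VB"
    using glued_in_side_iff assms(1,2,6-9) by (metis Diff_iff)+
  then have "x = a" "x' = a"
    using connector assms(4,5,8-11) unfolding adj_def by blast+
  then show False using glued_placed_at_connector assms(1-3,6,8) by blast
qed

lemma no_collision:
  assumes "i < k" "j < k" "i \<noteq> j" "{x, y} \<in> E" "{x', y'} \<in> E"
    "glued i x = glued j x'" "glued i y = glued j y'"
  shows False
proof -
  have yx: "{y, x} \<in> E" "{y', x'} \<in> E" using assms(4,5) by (simp_all add: insert_commute)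
  consider "x \<in> U \<or> x' \<in> U" | "y \<in> U \<or> y' \<in> U" | "x \<notin> U" "x' \<notin> U" "y \<notin> U" "y' \<notin> U"
    by blast
  then show False
  proof cases
    case 1
    then show False using no_collision_at_U assms by blast
  next
    case 2
    then show False using no_collision_at_U[OF assms(1-3) yx] assms(6,7) by blast
  next
    case 3
    then have "x \<in> VA \<union> VB" "y \<in> VA \<union> VB"
      using simple_graph_edgeD[OF simple assms(4)] V_covered by blast+
    then show False
      using 3 no_collision_within_side[OF _ assms(1-7)]
        no_collision_across[OF assms(1-7)] no_collision_across[OF assms(1-3) yx assms(7,6)]
      by blast
  qed
qed

lemma placement_glued: "placement k V E glued"
  unfolding placement_def placement_in_def
proof (intro conjI allI impI)
  show "bij_betw (glued i) V V" if "i < k" for i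
    using bij_glued that .
  show "edge_image (glued i) E \<inter> edge_image (glued j) E = {}"
    if "i < k" "j < k" "i \<noteq> j" for i j
    using no_collision[OF that] by (rule edge_image_disjointI)
qed

end

theorem mainTheorem3:
  fixes k :: nat and V :: "'a set" and E :: "'a set set" and VA U VB :: "'a set"
  assumes "k \<ge> 1"
    and "simple_graph V E"
    and "structure_graph k V E VA U VB"
  shows "placeable k V E"
proof -
  obtain a \<phi> \<psi> where "structure_graph_data k V E VA U VB a \<phi> \<psi>"
    using assms(2,3) unfolding structure_graph_def
    by (elim conjE exE) (rule that, unfold_locales)
  then interpret structure_graph_data k V E VA U VB a \<phi> \<psi> .
  show ?thesis
    unfolding placeable_def using placement_glued by blast
qed

end
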